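(* Let $h\ge2$, $L\in\mathbb{N}$, $\beta>0$, $\lambda\ge0$, $f,g:\mathbb{Z}^2\to\mathbb{R}$, let $\mathcal W:(\mathbb{Z}^2)^h\to(0,\infty)$ be any weight and $p,q\in(1,\infty)$ with $\frac1p+\frac1q=1$. Then for every $r\in\mathbb{N}$, $$\Xi(r)\le\Big(\max_{I\ne*}\big\|\widehat{\mathsf q}^{|f|,I}_L\tfrac1{\mathcal W}\big\|_{\ell^p}\Big)\Big(\max_{J\ne*}\big\|\mathcal W\,\overline{\mathsf q}^{|g|,J}_L\big\|_{\ell^q}\Big)\,\Xi^{\mathrm{bulk}}(r),$$ where $$\Xi^{\mathrm{bulk}}(r):=\sum_{\substack{I_1,\dots,I_r\vdash\{1,\dots,h\}\ \text{full support},\\ I_i\ne I_{i-1},\ I_i\ne*}}\Big\{\prod_{i=1}^r|\mathbb{E}[\xi^{I_i}_\beta]|\Big\}\Big(\max_{I,J\ne*,\,I\ne J}\big\|\mathcal W\widehat{\mathsf Q}^{I,J}_L\tfrac1{\mathcal W}\big\|_{\ell^q\to\ell^q}\Big)^{r-1}\Big(\max_{I\ne*}\big\|\mathcal W|\widehat{\mathsf U}|^I_{L,\lambda,\beta}\tfrac1{\mathcal W}\big\|_{\ell^q\to\ell^q}\Big)^r.$$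
   Context: Same setting as follows. $S$ simple random walk on $\mathbb{Z}^2$, $q_n(x):=\mathrm{P}(S_n=x\mid S_0=0)$, $q^f_n(x):=\sum_zq_n(x-z)f(z)$. $\omega$ i.i.d. independent of $S$ with mean $0$, variance $1$, $\lambda(\beta):=\log\mathbb{E}e^{\beta\omega}<\infty$; $\xi_\beta:=e^{\beta\omega-\lambda(\beta)}-1$. Partitions $I\vdash\{1,\dots,h\}$, $*$ = all singletons; $\mathbf x\sim I$: $x^a=x^b$ for $a,b$ in a common block, $x^a\ne x^b$ for $a,b$ in distinct blocks of size $\ge2$; full support: each $a$ lies in a block of size $\ge2$ of some $I_i$; $\mathbb{E}[\xi^J_\beta]:=\prod_{i:|J^i|\ge2}\mathbb{E}[\xi^{|J^i|}_\beta]$ for $J\ne*$. $\mathsf Q^{I,J}_n(\mathbf z,\mathbf x):=\mathbf 1_{\{\mathbf z\sim I,\mathbf x\sim J\}}\prod_iq_n(x^i-z^i)$, $\mathsf q^{f,J}_n(\mathbf x):=\mathbf 1_{\{\mathbf x\sim J\}}\prod_iq^f_n(x^i)$, $\widehat{\mathsf Q}^{I,J}_L:=\sum_{n=1}^L\mathsf Q^{I,J}_n$, $\widehat{\mathsf q}^{f,I}_L:=\sum_{n=1}^L\mathsf q^{f,I}_n$, $\overline{\mathsf q}^{g,J}_L(\mathbf z):=\max_{1\le n\le L}\mathsf q^{g,J}_n(\mathbf z)$; $|\mathsf U|^J_{m,\beta}(\mathbf z,\mathbf x):=\sum_{k\ge1}|\mathbb{E}\xi^J_\beta|^k\sum_{0=n_0<\dots<n_k=m}\sum_{\mathbf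 y_1..\mathbf y_{k-1}}\prod_{i}\mathsf Q^{J,J}_{n_i-n_{i-1}}(\mathbf y_{i-1},\mathbf y_i)$ ($\mathbf y_0=\mathbf z$, $\mathbf y_k=\mathbf x$), $|\widehat{\mathsf U}|^J_{L,\lambda,\beta}(\mathbf z,\mathbf x):=\mathbf 1_{\{\mathbf z=\mathbf x\sim J\}}+\sum_{m=1}^Le^{-\lambda m}|\mathsf U|^J_{m,\beta}(\mathbf z,\mathbf x)$. $\Xi(r):=\sum_{I_1..I_r\ \text{full support},\ I_i\ne I_{i-1},I_i\ne*}\{\prod_i|\mathbb{E}\xi^{I_i}_\beta|\}\sum_{\mathbf z_i,\mathbf z_i'}\widehat{\mathsf q}^{|f|,I_1}_L(\mathbf z_1)|\widehat{\mathsf U}|^{I_1}_{L,\lambda,\beta}(\mathbf z_1,\mathbf z_1')\prod_{i=2}^r\widehat{\mathsf Q}^{I_{i-1},I_i}_L(\mathbf z'_{i-1},\mathbf z_i)|\widehat{\mathsf U}|^{I_i}_{L,\lambda,\beta}(\mathbf z_i,\mathbf z_i')\,\overline{\mathsf q}^{|g|,I_r}_L(\mathbf z_r')$. Norms: $\|F\|_{\ell^p}:=(\sum|F|^p)^{1/p}$ on $(\mathbb{Z}^2)^h$; a kernel $\mathsf A(\mathbf z,\mathbf x)$ acts by $(\mathsf Ag)(\mathbf z)=\sum_{\mathbf x}\mathsf A(\mathbf z,\mathbf x)g(\mathbf x)$, $\|\mathsf A\|_{\ell^q\to\ell^q}$ is its operator norm; $(\mathcal W\mathsf A\tfrac1{\mathcal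 W})(\mathbf z,\mathbf x):=\mathcal W(\mathbf z)\mathsf A(\mathbf z,\mathbf x)/\mathcal W(\mathbf x)$, and $\widehat{\mathsf q}\tfrac1{\mathcal W}$, $\mathcal W\overline{\mathsf q}$ are pointwise products. *)

theory Defs
  imports "HOL-Probability.Probability"
begin

type_synonym pt = "int \<times> int"
type_synonym cfg = "nat \<Rightarrow> int \<times> int"  (* a point of (Z^2)^h, coordinates 1..h *)

definition cfgs :: "nat \<Rightarrow> cfg set" where
  "cfgs h = PiE {1..h} (\<lambda>_. UNIV)"

definition pdiff :: "pt \<Rightarrow> pt \<Rightarrow> pt" where
  "pdiff x z = (fst x - fst z, snd x - snd z)"

definition srw_step :: "pt pmf" where
  "srw_step = pmf_of_set {(1,0), (-1,0), (0,1), (0,-1)}"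

fun srw :: "nat \<Rightarrow> pt pmf" where
  "srw 0 = return_pmf (0,0)"
| "srw (Suc n) = bind_pmf (srw n) (\<lambda>y. map_pmf (\<lambda>e. (fst y + fst e, snd y + snd e)) srw_step)"

definition qrw :: "nat \<Rightarrow> pt \<Rightarrow> real" where
  "qrw n x = pmf (srw n) x"

(* q^F_n(x) = sum_z q_n(x-z) F(z), for nonnegative F (used with F = |f|) *)
definition qf :: "(pt \<Rightarrow> real) \<Rightarrow> nat \<Rightarrow> pt \<Rightarrow> ennreal" where
  "qf F n x = (\<Sum>\<^sub>\<infinity>z. ennreal (qrw n (pdiff x z) * F z))"

definition partitions :: "nat \<Rightarrow> nat set set set" where
  "partitions h = {I. partition_on {1..h} I}"

definition star :: "nat \<Rightarrow> nat set set" where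
  "star h = (\<lambda>a. {a}) ` {1..h}"

definition sim :: "cfg \<Rightarrow> nat set set \<Rightarrow> bool" where
  "sim x J \<longleftrightarrow> (\<forall>B\<in>J. \<forall>a\<in>B. \<forall>b\<in>B. x a = x b) \<and>
     (\<forall>B1\<in>J. \<forall>B2\<in>J. B1 \<noteq> B2 \<and> 2 \<le> card B1 \<and> 2 \<le> card B2 \<longrightarrow>
        (\<forall>a\<in>B1. \<forall>b\<in>B2. x a \<noteq> x b))"

definition QQ :: "nat \<Rightarrow> nat set set \<Rightarrow> nat set set \<Rightarrow> nat \<Rightarrow> cfg \<Rightarrow> cfg \<Rightarrow> ennreal" where
  "QQ h I J n z x = (if sim z I \<and> sim x J
      then ennreal (\<Prod>i\<in>{1..h}. qrw n (pdiff (x i) (z i))) else 0)"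

definition qqf :: "nat \<Rightarrow> (pt \<Rightarrow> real) \<Rightarrow> nat set set \<Rightarrow> nat \<Rightarrow> cfg \<Rightarrow> ennreal" where
  "qqf h F J n x = (if sim x J then (\<Prod>i\<in>{1..h}. qf F n (x i)) else 0)"

definition QQhat :: "nat \<Rightarrow> nat set set \<Rightarrow> nat set set \<Rightarrow> nat \<Rightarrow> cfg \<Rightarrow> cfg \<Rightarrow> ennreal" where
  "QQhat h I J L z x = (\<Sum>n\<in>{1..L}. QQ h I J n z x)"

definition qqhat :: "nat \<Rightarrow> (pt \<Rightarrow> real) \<Rightarrow> nat set set \<Rightarrow> nat \<Rightarrow> cfg \<Rightarrow> ennreal" where
  "qqhat h F I L x = (\<Sum>n\<in>{1..L}. qqf h F I n x)"

definition qqbar :: "nat \<Rightarrow> (pt \<Rightarrow> real) \<Rightarrow> nat set set \<Rightarrow> nat \<Rightarrow> cfg \<Rightarrow> ennreal" where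
  "qqbar h F J L x = (SUP n\<in>{1..L}. qqf h F J n x)"

definition lamb :: "real measure \<Rightarrow> real \<Rightarrow> real" where
  "lamb M \<beta> = ln (\<integral>\<omega>. exp (\<beta> * \<omega>) \<partial>M)"

definition xi_mom :: "real measure \<Rightarrow> real \<Rightarrow> nat \<Rightarrow> real" where
  "xi_mom M \<beta> k = (\<integral>\<omega>. (exp (\<beta> * \<omega> - lamb M \<beta>) - 1) ^ k \<partial>M)"

definition Exi :: "real measure \<Rightarrow> real \<Rightarrow> nat set set \<Rightarrow> real" where
  "Exi M \<beta> J = (\<Prod>B\<in>{B\<in>J. 2 \<le> card B}. xi_mom M \<beta> (card B))"

(* chain h J k m z x = sum over 0=n_0<...<n_k=m and y_1..y_{k-1} of prod Q^{J,J}_{n_i-n_{i-1}}(y_{i-1},y_i) *)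
fun chain :: "nat \<Rightarrow> nat set set \<Rightarrow> nat \<Rightarrow> nat \<Rightarrow> cfg \<Rightarrow> cfg \<Rightarrow> ennreal" where
  "chain h J 0 m z x = (if m = 0 \<and> z = x then 1 else 0)"
| "chain h J (Suc k) m z x =
     (\<Sum>n\<in>{1..m}. \<Sum>\<^sub>\<infinity>y\<in>cfgs h. QQ h J J n z y * chain h J k (m - n) y x)"

definition Uabs :: "real measure \<Rightarrow> real \<Rightarrow> nat \<Rightarrow> nat set set \<Rightarrow> nat \<Rightarrow> cfg \<Rightarrow> cfg \<Rightarrow> ennreal" where
  "Uabs M \<beta> h J m z x = (\<Sum>\<^sub>\<infinity>k\<in>{1..}. ennreal (\<bar>Exi M \<beta> J\<bar> ^ k) * chain h J k m z x)"

definition Uhat :: "real measure \<Rightarrow> real \<Rightarrow> nat \<Rightarrow> nat set set \<Rightarrow> nat \<Rightarrow> real \<Rightarrow> cfg \<Rightarrow> cfg \<Rightarrow> ennreal" where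
  "Uhat M \<beta> h J L lam z x = (if z = x \<and> sim x J then 1 else 0)
      + (\<Sum>m\<in>{1..L}. ennreal (exp (- lam * real m)) * Uabs M \<beta> h J m z x)"

definition full_support :: "nat \<Rightarrow> nat set set list \<Rightarrow> bool" where
  "full_support h Is \<longleftrightarrow> (\<forall>a\<in>{1..h}. \<exists>I\<in>set Is. \<exists>B\<in>I. a \<in> B \<and> 2 \<le> card B)"

(* admissible sequences I_1..I_r (stored as Is!0 .. Is!(r-1)) *)
definition admissible :: "nat \<Rightarrow> nat \<Rightarrow> nat set set list set" where
  "admissible h r = {Is. length Is = r \<and> set Is \<subseteq> partitions h \<and> (\<forall>I\<in>set Is. I \<noteq> star h)
       \<and> full_support h Is \<and> (\<forall>i. 0 < i \<and> i < r \<longrightarrow> Is ! i \<noteq> Is ! (i - 1))}"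

definition Xi :: "real measure \<Rightarrow> real \<Rightarrow> nat \<Rightarrow> nat \<Rightarrow> real \<Rightarrow> (pt \<Rightarrow> real) \<Rightarrow> (pt \<Rightarrow> real) \<Rightarrow> nat \<Rightarrow> ennreal" where
  "Xi M \<beta> h L lam f g r =
    (\<Sum>Is\<in>admissible h r. ennreal (\<Prod>i<r. \<bar>Exi M \<beta> (Is ! i)\<bar>) *
      (\<Sum>\<^sub>\<infinity>(zs, zs')\<in>PiE {..<r} (\<lambda>_. cfgs h) \<times> PiE {..<r} (\<lambda>_. cfgs h).
         qqhat h (\<lambda>z. \<bar>f z\<bar>) (Is ! 0) L (zs 0) * Uhat M \<beta> h (Is ! 0) L lam (zs 0) (zs' 0) *
         (\<Prod>i\<in>{1..<r}. QQhat h (Is ! (i - 1)) (Is ! i) L (zs' (i - 1)) (zs i) *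
                         Uhat M \<beta> h (Is ! i) L lam (zs i) (zs' i)) *
         qqbar h (\<lambda>z. \<bar>g z\<bar>) (Is ! (r - 1)) L (zs' (r - 1))))"

definition epowr :: "ennreal \<Rightarrow> real \<Rightarrow> ennreal" where
  "epowr x a = (if x = \<top> then \<top> else ennreal (enn2real x powr a))"

definition lpnorm :: "nat \<Rightarrow> real \<Rightarrow> (cfg \<Rightarrow> ennreal) \<Rightarrow> ennreal" where
  "lpnorm h p F = epowr (\<Sum>\<^sub>\<infinity>x\<in>cfgs h. epowr (F x) p) (1 / p)"

definition opnorm :: "nat \<Rightarrow> real \<Rightarrow> (cfg \<Rightarrow> cfg \<Rightarrow> ennreal) \<Rightarrow> ennreal" where
  "opnorm h q K = (SUP G\<in>{G. lpnorm h q G \<le> 1}. lpnorm h q (\<lambda>z. \<Sum>\<^sub>\<infinity>x\<in>cfgs h. K z x * G x))"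

definition nonstar :: "nat \<Rightarrow> nat set set set" where
  "nonstar h = partitions h - {star h}"

definition fnormmax :: "nat \<Rightarrow> nat \<Rightarrow> real \<Rightarrow> (pt \<Rightarrow> real) \<Rightarrow> (cfg \<Rightarrow> real) \<Rightarrow> ennreal" where
  "fnormmax h L p f W = (SUP I\<in>nonstar h.
      lpnorm h p (\<lambda>x. qqhat h (\<lambda>z. \<bar>f z\<bar>) I L x * ennreal (1 / W x)))"

definition gnormmax :: "nat \<Rightarrow> nat \<Rightarrow> real \<Rightarrow> (pt \<Rightarrow> real) \<Rightarrow> (cfg \<Rightarrow> real) \<Rightarrow> ennreal" where
  "gnormmax h L q g W = (SUP J\<in>nonstar h.
      lpnorm h q (\<lambda>x. ennreal (W x) * qqbar h (\<lambda>z. \<bar>g z\<bar>) J L x))"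

definition Qnormmax :: "nat \<Rightarrow> nat \<Rightarrow> real \<Rightarrow> (cfg \<Rightarrow> real) \<Rightarrow> ennreal" where
  "Qnormmax h L q W = (SUP IJ\<in>{(I, J). I \<in> nonstar h \<and> J \<in> nonstar h \<and> I \<noteq> J}.
      opnorm h q (\<lambda>z x. ennreal (W z) * QQhat h (fst IJ) (snd IJ) L z x * ennreal (1 / W x)))"

definition Unormmax :: "real measure \<Rightarrow> real \<Rightarrow> nat \<Rightarrow> nat \<Rightarrow> real \<Rightarrow> real \<Rightarrow> (cfg \<Rightarrow> real) \<Rightarrow> ennreal" where
  "Unormmax M \<beta> h L lam q W = (SUP I\<in>nonstar h.
      opnorm h q (\<lambda>z x. ennreal (W z) * Uhat M \<beta> h I L lam z x * ennreal (1 / W x)))"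

definition Xi_bulk :: "real measure \<Rightarrow> real \<Rightarrow> nat \<Rightarrow> nat \<Rightarrow> real \<Rightarrow> real \<Rightarrow> (cfg \<Rightarrow> real) \<Rightarrow> nat \<Rightarrow> ennreal" where
  "Xi_bulk M \<beta> h L lam q W r =
    (\<Sum>Is\<in>admissible h r. ennreal (\<Prod>i<r. \<bar>Exi M \<beta> (Is ! i)\<bar>) *
       Qnormmax h L q W ^ (r - 1) * Unormmax M \<beta> h L lam q W ^ r)"

end

theory Submission
  imports Defs
begin

(* For a fixed admissible sequence I_1, ..., I_r the summand of Xi(r) is a chain of nonnegative
   kernels  q^|f| U_1 Q_2 U_2 ... Q_r U_r q^|g|  summed over all intermediate configurations.
   Inserting 1 = (1/W) W between consecutive factors, Hoelder's inequality pairs q^|f| / W in l^p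
   with W times the rest of the chain in l^q, and every further kernel A then costs at most the
   l^q -> l^q norm of W A (1/W); peeling the chain from its right end leaves the l^q norm of
   W q^|g|. Bounding each norm by its maximum over partitions and summing over admissible
   sequences gives the bound. *)

section \<open>Nonnegative infinite sums\<close>

lemma sum_le_infsum_ennreal:
  fixes f :: "'a \<Rightarrow> ennreal"
  assumes "finite F" "F \<subseteq> A"
  shows "sum f F \<le> infsum f A"
  using assms by (subst nonneg_infsum_complete[of A f]) (auto intro!: SUP_upper)

lemma infsum_ennreal_eq_0_iff:
  fixes f :: "'a \<Rightarrow> ennreal"
  shows "infsum f A = 0 \<longleftrightarrow> (\<forall>x\<in>A. f x = 0)"
  using sum_le_infsum_ennreal[of "{_}" A f] by (auto intro: infsum_0 simp: le_zero_eq)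

lemma infsum_single_ennreal:
  fixes c :: ennreal
  assumes "x \<in> A"
  shows "infsum (\<lambda>y. if y = x then c else 0) A = c"
proof -
  have "infsum (\<lambda>y. if y = x then c else 0) A = infsum (\<lambda>y. if y = x then c else 0) {x}"
    by (rule infsum_cong_neutral) (use assms in auto)
  then show ?thesis by simp
qed

(* The library versions of the next two facts (infsum_cmult_right, infsum_Sigma) need a
   continuous multiplication or a uniform structure, which ennreal lacks (0 * \<infinity> = 0);
   the one-sided Tonelli inequality suffices below. *)

lemma infsum_cmult_right_ennreal:
  fixes f :: "'a \<Rightarrow> ennreal"
  shows "infsum (\<lambda>x. c * f x) A = c * infsum f A"
proof -
  have "infsum (\<lambda>x. c * f x) A = (SUP F\<in>{F. finite F \<and> F \<subseteq> A}. c * sum f F)"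
    by (subst nonneg_infsum_complete) (auto simp: sum_distrib_left)
  also have "\<dots> = c * infsum f A"
    by (subst nonneg_infsum_complete[of A f]) (auto simp: SUP_mult_left_ennreal)
  finally show ?thesis .
qed

lemma infsum_Sigma_le_ennreal:
  fixes f :: "'a \<times> 'b \<Rightarrow> ennreal"
  shows "infsum f (Sigma A B) \<le> infsum (\<lambda>x. infsum (\<lambda>y. f (x, y)) (B x)) A"
proof -
  have "sum f F \<le> infsum (\<lambda>x. infsum (\<lambda>y. f (x, y)) (B x)) A"
    if F: "finite F" "F \<subseteq> Sigma A B" for F
  proof -
    define Y where "Y x = {y. (x, y) \<in> F}" for x
    have fin_X: "finite (fst ` F)"
      using F by simp
    have fin_Y: "finite (Y x)" for x
    proof -
      have "Y x \<subseteq> snd ` F"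
        by (force simp: Y_def)
      then show ?thesis
        using F(1) finite_subset by blast
    qed
    have "F = Sigma (fst ` F) Y"
      by (auto simp: Y_def intro: rev_image_eqI)
    then have "sum f F = sum f (Sigma (fst ` F) Y)"
      by (rule arg_cong)
    also have "\<dots> = (\<Sum>x\<in>fst ` F. \<Sum>y\<in>Y x. f (x, y))"
      using fin_X fin_Y by (simp add: sum.Sigma split_def)
    also have "\<dots> \<le> (\<Sum>x\<in>fst ` F. infsum (\<lambda>y. f (x, y)) (B x))"
    proof (rule sum_mono)
      fix x assume "x \<in> fst ` F"
      have "Y x \<subseteq> B x"
        using F by (auto simp: Y_def)
      then show "(\<Sum>y\<in>Y x. f (x, y)) \<le> infsum (\<lambda>y. f (x, y)) (B x)"
        using fin_Y by (rule sum_le_infsum_ennreal[rotated])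
    qed
    also have "\<dots> \<le> infsum (\<lambda>x. infsum (\<lambda>y. f (x, y)) (B x)) A"
      using F fin_X by (intro sum_le_infsum_ennreal) auto
    finally show ?thesis .
  qed
  then show ?thesis
    by (subst nonneg_infsum_complete[of "Sigma A B" f]) (auto intro!: SUP_least)
qed

lemma ennreal_mult_insert_weight:
  fixes a b :: ennreal and w :: real
  assumes "w > 0"
  shows "a * b = (a * ennreal (1 / w)) * (ennreal w * b)"
proof -
  have "ennreal (1 / w) * ennreal w = 1"
    using assms by (simp flip: ennreal_mult)
  then show ?thesis
    by (metis mult.assoc mult.left_commute mult_1_right)
qed

section \<open>Powers, \<open>\<ell>\<^sup>p\<close> norms and H\<ouml>lder's inequality\<close>

lemma epowr_top [simp]: "epowr \<top> a = \<top>"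
  by (simp add: epowr_def)

lemma epowr_0 [simp]: "epowr 0 a = 0"
  by (simp add: epowr_def)

lemma epowr_1 [simp]: "epowr 1 a = 1"
  by (simp add: epowr_def)

lemma epowr_ennreal: "t \<ge> 0 \<Longrightarrow> epowr (ennreal t) a = ennreal (t powr a)"
  by (simp add: epowr_def)

lemma epowr_eq_0_iff: "epowr y a = 0 \<longleftrightarrow> y = 0"
  by (cases y) (auto simp: epowr_def)

lemma epowr_ennreal_mult:
  assumes "c > 0"
  shows "epowr (ennreal c * y) a = ennreal (c powr a) * epowr y a"
proof (cases y)
  case (real t)
  then have "epowr (ennreal c * y) a = ennreal ((c * t) powr a)"
    using assms by (simp add: epowr_ennreal flip: ennreal_mult)
  then show ?thesis
    using real assms by (simp add: epowr_ennreal powr_mult ennreal_mult)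
next
  case top
  then show ?thesis
    using assms by (simp add: epowr_def ennreal_mult_top)
qed

lemma lpnorm_eq_0_iff: "lpnorm h p F = 0 \<longleftrightarrow> (\<forall>x\<in>cfgs h. F x = 0)"
  unfolding lpnorm_def epowr_eq_0_iff infsum_ennreal_eq_0_iff by simp

lemma lpnorm_cmult:
  assumes "c > 0" "p > 0"
  shows "lpnorm h p (\<lambda>x. ennreal c * F x) = ennreal c * lpnorm h p F"
proof -
  have "(\<Sum>\<^sub>\<infinity>x\<in>cfgs h. epowr (ennreal c * F x) p)
      = ennreal (c powr p) * (\<Sum>\<^sub>\<infinity>x\<in>cfgs h. epowr (F x) p)"
    using assms by (simp add: epowr_ennreal_mult infsum_cmult_right_ennreal)
  then show ?thesis
    using assms by (simp add: lpnorm_def epowr_ennreal_mult powr_powr)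
qed

lemma Young_inequality_ennreal:
  fixes u v :: ennreal and a b p q :: real
  assumes pq: "p > 1" "q > 1" "1 / p + 1 / q = 1" and ab: "a > 0" "b > 0"
  shows "u * v \<le> ennreal (a * b / (p * a powr p)) * epowr u p
                + ennreal (a * b / (q * b powr q)) * epowr v q"
proof -
  define c1 c2 where "c1 = a * b / (p * a powr p)" and "c2 = a * b / (q * b powr q)"
  have c: "c1 > 0" "c2 > 0"
    using pq ab by (auto simp: c1_def c2_def)
  show ?thesis
  proof (cases "u = \<top> \<or> v = \<top>")
    case True
    then show ?thesis
      using c by (auto simp: epowr_def ennreal_mult_top c1_def [symmetric] c2_def [symmetric])
  next
    case False
    then obtain s t where st: "u = ennreal s" "v = ennreal t" "s \<ge> 0" "t \<ge> 0"
      by (cases u; cases v) auto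
    have "s / a * (t / b) \<le> (s / a) powr p / p + (t / b) powr q / q"
      using Youngs_inequality[OF pq, of "s / a" "t / b"] st ab by simp
    then have "a * b * (s / a * (t / b)) \<le> a * b * ((s / a) powr p / p + (t / b) powr q / q)"
      using ab by (intro mult_left_mono) auto
    then have "s * t \<le> c1 * s powr p + c2 * t powr q"
      using ab st by (simp add: c1_def c2_def powr_divide field_simps)
    then have "ennreal (s * t) \<le> ennreal (c1 * s powr p + c2 * t powr q)"
      by (rule ennreal_leI)
    then show ?thesis
      using st c by (simp add: epowr_ennreal ennreal_plus ennreal_mult c1_def [symmetric] c2_def [symmetric])
  qed
qed

lemma Holder_inequality_infsum_ennreal:
  fixes F G :: "'a \<Rightarrow> ennreal"
  assumes pq: "p > 1" "q > 1" "1 / p + 1 / q = 1"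
  shows "infsum (\<lambda>x. F x * G x) A \<le>
    epowr (infsum (\<lambda>x. epowr (F x) p) A) (1 / p) * epowr (infsum (\<lambda>x. epowr (G x) q) A) (1 / q)"
    (is "?L \<le> epowr ?SF _ * epowr ?SG _")
proof (cases "?SF = 0 \<or> ?SG = 0")
  case True
  then have "?L = 0"
    by (auto simp: infsum_ennreal_eq_0_iff epowr_eq_0_iff)
  then show ?thesis by simp
next
  case nonzero: False
  show ?thesis
  proof (cases "?SF = \<top> \<or> ?SG = \<top>")
    case True
    moreover have "epowr ?SF (1 / p) \<noteq> 0" "epowr ?SG (1 / q) \<noteq> 0"
      using nonzero by (auto simp: epowr_eq_0_iff)
    ultimately show ?thesis
      by (auto simp: ennreal_mult_eq_top_iff)
  next
    case False
    then obtain sf sg where sf: "?SF = ennreal sf" "sf > 0" and sg: "?SG = ennreal sg" "sg > 0"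
      using nonzero by (cases ?SF; cases ?SG) (auto simp: ennreal_eq_0_iff)
    define a b where "a = sf powr (1 / p)" and "b = sg powr (1 / q)"
    have ab: "a > 0" "b > 0" "a powr p = sf" "b powr q = sg"
      using sf sg pq by (auto simp: a_def b_def powr_powr)
    have "?L \<le> infsum (\<lambda>x. ennreal (a * b / (p * sf)) * epowr (F x) p
                          + ennreal (a * b / (q * sg)) * epowr (G x) q) A"
      using Young_inequality_ennreal[OF pq ab(1,2)] ab by (intro infsum_mono nonneg_summable_on_complete) auto
    also have "\<dots> = ennreal (a * b / (p * sf)) * ?SF + ennreal (a * b / (q * sg)) * ?SG"
      by (simp add: infsum_add nonneg_summable_on_complete infsum_cmult_right_ennreal)
    also have "\<dots> = ennreal (a * b / p) + ennreal (a * b / q)"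
      using sf sg pq ab by (simp add: ennreal_mult [symmetric])
    also have "\<dots> = ennreal (a * b)"
    proof -
      have "a * b / p + a * b / q = a * b * (1 / p + 1 / q)"
        by (simp add: field_simps)
      then show ?thesis
        using pq ab by (simp add: ennreal_plus [symmetric] del: ennreal_plus)
    qed
    also have "\<dots> = epowr ?SF (1 / p) * epowr ?SG (1 / q)"
      using sf sg by (simp add: a_def b_def epowr_ennreal ennreal_mult)
    finally show ?thesis .
  qed
qed

section \<open>Operator norms of nonnegative kernels\<close>

lemma opnorm_eq_0_imp_kernel_eq_0:
  assumes "opnorm h q K = 0" "z \<in> cfgs h" "x \<in> cfgs h"
  shows "K z x = 0"
proof -
  define \<delta> :: "cfg \<Rightarrow> ennreal" where "\<delta> y = (if y = x then 1 else 0)" for y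
  have "(\<lambda>y. epowr (\<delta> y) q) = \<delta>"
    by (auto simp: \<delta>_def)
  moreover have "infsum \<delta> (cfgs h) = 1"
    unfolding \<delta>_def by (rule infsum_single_ennreal[OF assms(3)])
  ultimately have "lpnorm h q \<delta> = 1"
    by (simp add: lpnorm_def)
  then have "lpnorm h q (\<lambda>z. \<Sum>\<^sub>\<infinity>y\<in>cfgs h. K z y * \<delta> y) \<le> opnorm h q K"
    unfolding opnorm_def by (intro SUP_upper) auto
  then have "(\<Sum>\<^sub>\<infinity>y\<in>cfgs h. K z y * \<delta> y) = 0"
    using assms(1,2) by (simp add: lpnorm_eq_0_iff)
  then show ?thesis
    using infsum_single_ennreal[OF assms(3), of "K z x"]
    by (simp add: \<delta>_def if_distrib cong: if_cong)
qed

lemma lpnorm_kernel_le_opnorm: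
  assumes "q > 0"
  shows "lpnorm h q (\<lambda>z. \<Sum>\<^sub>\<infinity>x\<in>cfgs h. K z x * G x) \<le> opnorm h q K * lpnorm h q G"
    (is "lpnorm h q ?KG \<le> _")
proof (cases "lpnorm h q G = 0 \<or> opnorm h q K = 0")
  case True
  then have "?KG z = 0" if "z \<in> cfgs h" for z
    using that opnorm_eq_0_imp_kernel_eq_0[of h q K z]
    by (auto simp: lpnorm_eq_0_iff infsum_ennreal_eq_0_iff)
  then have "lpnorm h q ?KG = 0"
    by (simp add: lpnorm_eq_0_iff)
  then show ?thesis
    by simp
next
  case nonzero: False
  show ?thesis
  proof (cases "lpnorm h q G")
    case top
    then show ?thesis
      using nonzero by (simp add: ennreal_mult_top)
  next
    case (real c)
    with nonzero have c: "lpnorm h q G = ennreal c" "c > 0"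
      by (auto simp: ennreal_eq_0_iff)
    have "lpnorm h q (\<lambda>x. ennreal (1 / c) * G x) = 1"
      using c assms by (simp add: lpnorm_cmult ennreal_mult [symmetric])
    then have "lpnorm h q (\<lambda>z. \<Sum>\<^sub>\<infinity>x\<in>cfgs h. K z x * (ennreal (1 / c) * G x)) \<le> opnorm h q K"
      unfolding opnorm_def by (intro SUP_upper) auto
    moreover have "(\<lambda>z. \<Sum>\<^sub>\<infinity>x\<in>cfgs h. K z x * (ennreal (1 / c) * G x)) = (\<lambda>z. ennreal (1 / c) * ?KG z)"
      by (subst infsum_cmult_right_ennreal [symmetric]) (simp add: mult.left_commute)
    ultimately have "ennreal (1 / c) * lpnorm h q ?KG \<le> opnorm h q K"
      using c assms by (simp add: lpnorm_cmult)
    then have "ennreal c * (ennreal (1 / c) * lpnorm h q ?KG) \<le> ennreal c * opnorm h q K"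
      by (rule mult_left_mono) simp
    then show ?thesis
      using c by (simp add: mult.assoc [symmetric] mult.commute ennreal_mult [symmetric])
  qed
qed

lemma lpnorm_weighted_kernel_le:
  fixes W :: "cfg \<Rightarrow> real"
  assumes "q > 0" and W: "\<forall>x\<in>cfgs h. W x > 0"
    and "opnorm h q (\<lambda>z x. ennreal (W z) * K z x * ennreal (1 / W x)) \<le> c"
  shows "lpnorm h q (\<lambda>z. ennreal (W z) * (\<Sum>\<^sub>\<infinity>x\<in>cfgs h. K z x * \<phi> x))
         \<le> c * lpnorm h q (\<lambda>x. ennreal (W x) * \<phi> x)"
proof -
  have weigh: "ennreal (W z) * (\<Sum>\<^sub>\<infinity>x\<in>cfgs h. K z x * \<phi> x)
     = (\<Sum>\<^sub>\<infinity>x\<in>cfgs h. (ennreal (W z) * K z x * ennreal (1 / W x)) * (ennreal (W x) * \<phi> x))" for z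
  proof -
    have "ennreal (W z) * (K z x * \<phi> x)
        = (ennreal (W z) * K z x * ennreal (1 / W x)) * (ennreal (W x) * \<phi> x)"
      if "x \<in> cfgs h" for x
      using ennreal_mult_insert_weight[of "W x" "ennreal (W z) * K z x" "\<phi> x"] W that
      by (simp add: mult.assoc)
    then show ?thesis
      by (simp add: infsum_cmult_right_ennreal [symmetric] cong: infsum_cong)
  qed
  have "lpnorm h q (\<lambda>z. ennreal (W z) * (\<Sum>\<^sub>\<infinity>x\<in>cfgs h. K z x * \<phi> x))
     \<le> opnorm h q (\<lambda>z x. ennreal (W z) * K z x * ennreal (1 / W x)) * lpnorm h q (\<lambda>x. ennreal (W x) * \<phi> x)"
    unfolding weigh by (rule lpnorm_kernel_le_opnorm[OF assms(1)])
  also have "\<dots> \<le> c * lpnorm h q (\<lambda>x. ennreal (W x) * \<phi> x)"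
    using assms(3) by (rule mult_right_mono) simp
  finally show ?thesis .
qed

section \<open>Chains of kernels\<close>

lemma infsum_PiE_lessThan_Suc_pairs:
  fixes A :: "'a set" and f :: "((nat \<Rightarrow> 'a) \<times> (nat \<Rightarrow> 'a)) \<Rightarrow> ennreal"
  defines "E \<equiv> \<lambda>n. PiE {..<n} (\<lambda>_. A)"
  shows "infsum f (E (Suc r) \<times> E (Suc r))
       = infsum (\<lambda>((zs, zs'), (z, z')). f (zs(r := z), zs'(r := z'))) ((E r \<times> E r) \<times> (A \<times> A))"
proof (rule infsum_reindex_bij_witness[symmetric,
      where j = "\<lambda>((zs, zs'), (z, z')). (zs(r := z), zs'(r := z'))"
        and i = "\<lambda>(zs, zs'). ((zs(r := undefined), zs'(r := undefined)), (zs r, zs' r))"])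
  fix w assume "w \<in> (E r \<times> E r) \<times> (A \<times> A)"
  then obtain zs zs' z z' where w: "w = ((zs, zs'), (z, z'))"
    and mem: "zs \<in> E r" "zs' \<in> E r" "z \<in> A" "z' \<in> A"
    by auto
  have "zs r = undefined" "zs' r = undefined"
    using mem(1,2) unfolding E_def by (auto intro: PiE_arb)
  then have "zs(r := undefined) = zs" "zs'(r := undefined) = zs'"
    by (simp_all add: fun_upd_idem)
  then show "(\<lambda>(zs, zs'). ((zs(r := undefined), zs'(r := undefined)), (zs r, zs' r)))
      ((\<lambda>((zs, zs'), (z, z')). (zs(r := z), zs'(r := z'))) w) = w"
    by (simp add: w)
  have "zs(r := z) \<in> E (Suc r)" "zs'(r := z') \<in> E (Suc r)"
    using mem by (simp_all add: E_def lessThan_Suc PiE_fun_upd)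
  then show "(\<lambda>((zs, zs'), (z, z')). (zs(r := z), zs'(r := z'))) w \<in> E (Suc r) \<times> E (Suc r)"
    by (simp add: w)
next
  fix v assume "v \<in> E (Suc r) \<times> E (Suc r)"
  then obtain zs zs' where v: "v = (zs, zs')" and mem: "zs \<in> E (Suc r)" "zs' \<in> E (Suc r)"
    by auto
  show "(\<lambda>((zs, zs'), (z, z')). (zs(r := z), zs'(r := z')))
      ((\<lambda>(zs, zs'). ((zs(r := undefined), zs'(r := undefined)), (zs r, zs' r))) v) = v"
    by (simp add: v)
  have "zs(r := undefined) \<in> E r" "zs'(r := undefined) \<in> E r"
    using mem by (simp_all add: E_def lessThan_Suc fun_upd_in_PiE)
  moreover have "zs r \<in> A" "zs' r \<in> A"
    using mem by (auto simp: E_def)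
  ultimately show "(\<lambda>(zs, zs'). ((zs(r := undefined), zs'(r := undefined)), (zs r, zs' r))) v
      \<in> (E r \<times> E r) \<times> (A \<times> A)"
    by (simp add: v)
qed (simp add: split_beta)

definition path_sum :: "'a set \<Rightarrow> ('a \<Rightarrow> ennreal) \<Rightarrow> (nat \<Rightarrow> 'a \<Rightarrow> 'a \<Rightarrow> ennreal)
    \<Rightarrow> (nat \<Rightarrow> 'a \<Rightarrow> 'a \<Rightarrow> ennreal) \<Rightarrow> nat \<Rightarrow> ('a \<Rightarrow> ennreal) \<Rightarrow> ennreal" where
  "path_sum A f0 Q U r \<phi> = (\<Sum>\<^sub>\<infinity>(zs, zs')\<in>PiE {..<r} (\<lambda>_. A) \<times> PiE {..<r} (\<lambda>_. A).
      f0 (zs 0) * U 0 (zs 0) (zs' 0) *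
      (\<Prod>i\<in>{1..<r}. Q i (zs' (i - 1)) (zs i) * U i (zs i) (zs' i)) * \<phi> (zs' (r - 1)))"

lemma path_sum_1_le:
  "path_sum A f0 Q U 1 \<phi> \<le> (\<Sum>\<^sub>\<infinity>z\<in>A. f0 z * (\<Sum>\<^sub>\<infinity>z'\<in>A. U 0 z z' * \<phi> z'))"
proof -
  let ?E0 = "{((\<lambda>_. undefined, \<lambda>_. undefined) :: (nat \<Rightarrow> 'a) \<times> (nat \<Rightarrow> 'a))}"
  have "path_sum A f0 Q U 1 \<phi>
      = (\<Sum>\<^sub>\<infinity>((zs, zs'), (z, z'))\<in>?E0 \<times> (A \<times> A). f0 z * U 0 z z' * \<phi> z')"
    unfolding path_sum_def using infsum_PiE_lessThan_Suc_pairs[where A = A and r = 0] by simp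
  also have "\<dots> \<le> (\<Sum>\<^sub>\<infinity>(z, z')\<in>A \<times> A. f0 z * U 0 z z' * \<phi> z')"
    using infsum_Sigma_le_ennreal[of "\<lambda>((zs, zs'), (z, z')). f0 z * U 0 z z' * \<phi> z'" ?E0 "\<lambda>_. A \<times> A"]
    by simp
  also have "\<dots> \<le> (\<Sum>\<^sub>\<infinity>z\<in>A. \<Sum>\<^sub>\<infinity>z'\<in>A. f0 z * (U 0 z z' * \<phi> z'))"
    using infsum_Sigma_le_ennreal[of "\<lambda>(z, z'). f0 z * U 0 z z' * \<phi> z'" A "\<lambda>_. A"]
    by (simp add: mult.assoc)
  also have "\<dots> = (\<Sum>\<^sub>\<infinity>z\<in>A. f0 z * (\<Sum>\<^sub>\<infinity>z'\<in>A. U 0 z z' * \<phi> z'))"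
    by (simp add: infsum_cmult_right_ennreal)
  finally show ?thesis .
qed

lemma path_sum_Suc_le:
  assumes "r \<ge> 1"
  shows "path_sum A f0 Q U (Suc r) \<phi>
    \<le> path_sum A f0 Q U r (\<lambda>y. \<Sum>\<^sub>\<infinity>z\<in>A. Q r y z * (\<Sum>\<^sub>\<infinity>z'\<in>A. U r z z' * \<phi> z'))"
    (is "_ \<le> path_sum A f0 Q U r ?\<psi>")
proof -
  let ?E = "PiE {..<r} (\<lambda>_. A)"
  define C where "C zs zs' = f0 (zs 0) * U 0 (zs 0) (zs' 0) *
      (\<Prod>i\<in>{1..<r}. Q i (zs' (i - 1)) (zs i) * U i (zs i) (zs' i))" for zs zs'
  have extend: "f0 ((zs(r := z)) 0) * U 0 ((zs(r := z)) 0) ((zs'(r := z')) 0) *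
      (\<Prod>i\<in>{1..<Suc r}. Q i ((zs'(r := z')) (i - 1)) ((zs(r := z)) i)
                          * U i ((zs(r := z)) i) ((zs'(r := z')) i))
      * \<phi> ((zs'(r := z')) (Suc r - 1))
    = C zs zs' * (Q r (zs' (r - 1)) z * (U r z z' * \<phi> z'))" for zs zs' z z'
  proof -
    have "(\<Prod>i\<in>{1..<r}. Q i ((zs'(r := z')) (i - 1)) ((zs(r := z)) i) * U i ((zs(r := z)) i) ((zs'(r := z')) i))
        = (\<Prod>i\<in>{1..<r}. Q i (zs' (i - 1)) (zs i) * U i (zs i) (zs' i))"
      by (rule prod.cong) auto
    moreover have "r \<noteq> 0" "r - 1 \<noteq> r"
      using assms by auto
    ultimately show ?thesis
      by (simp add: C_def prod.atLeastLessThan_Suc ac_simps)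
  qed
  have inner: "(\<Sum>\<^sub>\<infinity>(z, z')\<in>A \<times> A. Q r y z * (U r z z' * \<phi> z')) \<le> ?\<psi> y" for y
    using infsum_Sigma_le_ennreal[of "\<lambda>(z, z'). Q r y z * (U r z z' * \<phi> z')" A "\<lambda>_. A"]
    by (simp add: infsum_cmult_right_ennreal)
  have "path_sum A f0 Q U (Suc r) \<phi>
      = (\<Sum>\<^sub>\<infinity>((zs, zs'), (z, z'))\<in>(?E \<times> ?E) \<times> (A \<times> A).
           C zs zs' * (Q r (zs' (r - 1)) z * (U r z z' * \<phi> z')))"
    unfolding path_sum_def infsum_PiE_lessThan_Suc_pairs[where A = A and r = r]
    by (simp only: prod.case extend)
  also have "\<dots> \<le> (\<Sum>\<^sub>\<infinity>(zs, zs')\<in>?E \<times> ?E.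
      \<Sum>\<^sub>\<infinity>(z, z')\<in>A \<times> A. C zs zs' * (Q r (zs' (r - 1)) z * (U r z z' * \<phi> z')))"
    using infsum_Sigma_le_ennreal[of "\<lambda>((zs, zs'), (z, z')). C zs zs' * (Q r (zs' (r - 1)) z * (U r z z' * \<phi> z'))"
        "?E \<times> ?E" "\<lambda>_. A \<times> A"]
    by (simp add: split_def)
  also have "\<dots> = (\<Sum>\<^sub>\<infinity>(zs, zs')\<in>?E \<times> ?E.
      C zs zs' * (\<Sum>\<^sub>\<infinity>(z, z')\<in>A \<times> A. Q r (zs' (r - 1)) z * (U r z z' * \<phi> z')))"
    by (simp add: split_def infsum_cmult_right_ennreal)
  also have "\<dots> \<le> (\<Sum>\<^sub>\<infinity>(zs, zs')\<in>?E \<times> ?E. C zs zs' * ?\<psi> (zs' (r - 1)))"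
    using inner by (auto intro!: infsum_mono nonneg_summable_on_complete mult_left_mono)
  also have "\<dots> = path_sum A f0 Q U r ?\<psi>"
    by (simp add: path_sum_def C_def)
  finally show ?thesis .
qed

lemma path_sum_le_weighted_norms:
  fixes W :: "cfg \<Rightarrow> real"
  assumes pq: "p > 1" "q > 1" "1 / p + 1 / q = 1"
    and W: "\<forall>x\<in>cfgs h. W x > 0"
    and f0_bound: "lpnorm h p (\<lambda>x. f0 x * ennreal (1 / W x)) \<le> F"
    and Q_bound: "\<And>i. 1 \<le> i \<Longrightarrow> i < r \<Longrightarrow> opnorm h q (\<lambda>z x. ennreal (W z) * Q i z x * ennreal (1 / W x)) \<le> CQ"
    and U_bound: "\<And>i. i < r \<Longrightarrow> opnorm h q (\<lambda>z x. ennreal (W z) * U i z x * ennreal (1 / W x)) \<le> CU"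
    and "1 \<le> r"
  shows "path_sum (cfgs h) f0 Q U r \<phi> \<le> F * CQ ^ (r - 1) * CU ^ r * lpnorm h q (\<lambda>x. ennreal (W x) * \<phi> x)"
  using \<open>1 \<le> r\<close>
proof (induction r arbitrary: \<phi> rule: dec_induct)
  case base
  let ?U\<phi> = "\<lambda>z. \<Sum>\<^sub>\<infinity>z'\<in>cfgs h. U 0 z z' * \<phi> z'"
  have "path_sum (cfgs h) f0 Q U 1 \<phi> \<le> (\<Sum>\<^sub>\<infinity>z\<in>cfgs h. f0 z * ?U\<phi> z)"
    by (rule path_sum_1_le)
  also have "\<dots> = (\<Sum>\<^sub>\<infinity>z\<in>cfgs h. (f0 z * ennreal (1 / W z)) * (ennreal (W z) * ?U\<phi> z))"
    using W by (intro infsum_cong ennreal_mult_insert_weight) auto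
  also have "\<dots> \<le> lpnorm h p (\<lambda>x. f0 x * ennreal (1 / W x)) * lpnorm h q (\<lambda>z. ennreal (W z) * ?U\<phi> z)"
    unfolding lpnorm_def by (rule Holder_inequality_infsum_ennreal[OF pq])
  also have "\<dots> \<le> F * (CU * lpnorm h q (\<lambda>x. ennreal (W x) * \<phi> x))"
    using pq W U_bound \<open>1 \<le> r\<close> by (intro mult_mono f0_bound lpnorm_weighted_kernel_le) auto
  finally show ?case
    by (simp add: mult.assoc)
next
  case (step n)
  let ?U\<phi> = "\<lambda>z. \<Sum>\<^sub>\<infinity>z'\<in>cfgs h. U n z z' * \<phi> z'"
  let ?\<psi> = "\<lambda>y. \<Sum>\<^sub>\<infinity>z\<in>cfgs h. Q n y z * ?U\<phi> z"
  let ?N = "\<lambda>G. lpnorm h q (\<lambda>x. ennreal (W x) * G x)"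
  have "path_sum (cfgs h) f0 Q U (Suc n) \<phi> \<le> path_sum (cfgs h) f0 Q U n ?\<psi>"
    using step.hyps(1) by (rule path_sum_Suc_le)
  also have "\<dots> \<le> F * CQ ^ (n - 1) * CU ^ n * ?N ?\<psi>"
    by (rule step.IH)
  also have "?N ?\<psi> \<le> CQ * ?N ?U\<phi>"
    using pq W Q_bound step.hyps by (intro lpnorm_weighted_kernel_le) auto
  also have "?N ?U\<phi> \<le> CU * ?N \<phi>"
    using pq W U_bound step.hyps by (intro lpnorm_weighted_kernel_le) auto
  finally have "path_sum (cfgs h) f0 Q U (Suc n) \<phi> \<le> F * CQ ^ (n - 1) * CU ^ n * (CQ * (CU * ?N \<phi>))"
    by (simp add: mult_left_mono)
  also have "\<dots> = F * CQ ^ (Suc n - 1) * CU ^ Suc n * ?N \<phi>"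
    using step.hyps by (cases n) (simp_all add: ac_simps)
  finally show ?case .
qed

lemma admissible_0_empty:
  assumes "h \<ge> 1"
  shows "admissible h 0 = {}"
  using assms by (auto simp: admissible_def full_support_def)

lemma admissible_nth_nonstar:
  assumes "Is \<in> admissible h r" "i < r"
  shows "Is ! i \<in> nonstar h"
  using assms nth_mem[of i Is] by (auto simp: admissible_def nonstar_def)

lemma path_sum_admissible_le:
  fixes W :: "cfg \<Rightarrow> real"
  assumes pq: "p > 1" "q > 1" "1 / p + 1 / q = 1"
    and W: "\<forall>x\<in>cfgs h. W x > 0"
    and Is: "Is \<in> admissible h r" and "1 \<le> r"
  shows "path_sum (cfgs h) (qqhat h (\<lambda>z. \<bar>f z\<bar>) (Is ! 0) L) (\<lambda>i. QQhat h (Is ! (i - 1)) (Is ! i) L)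
           (\<lambda>i. Uhat M \<beta> h (Is ! i) L lam) r (qqbar h (\<lambda>z. \<bar>g z\<bar>) (Is ! (r - 1)) L)
    \<le> fnormmax h L p f W * Qnormmax h L q W ^ (r - 1) * Unormmax M \<beta> h L lam q W ^ r
       * gnormmax h L q g W"
proof -
  have nonstar: "Is ! i \<in> nonstar h" if "i < r" for i
    using Is that by (rule admissible_nth_nonstar)
  have Q_bound: "opnorm h q (\<lambda>z x. ennreal (W z) * QQhat h (Is ! (i - 1)) (Is ! i) L z x * ennreal (1 / W x))
      \<le> Qnormmax h L q W" if "1 \<le> i" "i < r" for i
  proof -
    have "Is ! i \<noteq> Is ! (i - 1)"
      using Is that by (auto simp: admissible_def)
    then have "(Is ! (i - 1), Is ! i) \<in> {(I, J). I \<in> nonstar h \<and> J \<in> nonstar h \<and> I \<noteq> J}"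
      using nonstar that by auto
    then show ?thesis
      unfolding Qnormmax_def by (rule SUP_upper2) simp
  qed
  have "path_sum (cfgs h) (qqhat h (\<lambda>z. \<bar>f z\<bar>) (Is ! 0) L) (\<lambda>i. QQhat h (Is ! (i - 1)) (Is ! i) L)
          (\<lambda>i. Uhat M \<beta> h (Is ! i) L lam) r (qqbar h (\<lambda>z. \<bar>g z\<bar>) (Is ! (r - 1)) L)
      \<le> fnormmax h L p f W * Qnormmax h L q W ^ (r - 1) * Unormmax M \<beta> h L lam q W ^ r
        * lpnorm h q (\<lambda>x. ennreal (W x) * qqbar h (\<lambda>z. \<bar>g z\<bar>) (Is ! (r - 1)) L x)"
    using \<open>1 \<le> r\<close> nonstar
    by (intro path_sum_le_weighted_norms[OF pq W] Q_bound)
      (auto simp: fnormmax_def Unormmax_def intro!: SUP_upper)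
  also have "\<dots> \<le> fnormmax h L p f W * Qnormmax h L q W ^ (r - 1) * Unormmax M \<beta> h L lam q W ^ r
       * gnormmax h L q g W"
    using \<open>1 \<le> r\<close> nonstar
    by (auto simp: gnormmax_def intro!: mult_left_mono SUP_upper)
  finally show ?thesis .
qed

theorem theorem4p10:
  fixes M :: "real measure" and \<beta> lam p q :: real and h L r :: nat
    and f g :: "int \<times> int \<Rightarrow> real" and W :: "cfg \<Rightarrow> real"
  assumes "prob_space M" and "sets M = sets borel"
    and "integrable M (\<lambda>\<omega>. \<omega> ^ 2)"
    and "(\<integral>\<omega>. \<omega> \<partial>M) = 0" and "(\<integral>\<omega>. \<omega> ^ 2 \<partial>M) = 1"
    and "integrable M (\<lambda>\<omega>. exp (\<beta> * \<omega>))"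
    and "2 \<le> h" and "\<beta> > 0" and "lam \<ge> 0"
    and "\<forall>x\<in>cfgs h. W x > 0"
    and "p > 1" and "q > 1" and "1 / p + 1 / q = 1"
  shows "Xi M \<beta> h L lam f g r \<le> fnormmax h L p f W * gnormmax h L q g W * Xi_bulk M \<beta> h L lam q W r"
proof (cases "r = 0")
  case True
  then show ?thesis
    using admissible_0_empty[of h] \<open>2 \<le> h\<close> by (simp add: Xi_def)
next
  case False
  let ?F = "fnormmax h L p f W" and ?G = "gnormmax h L q g W"
    and ?Q = "Qnormmax h L q W" and ?U = "Unormmax M \<beta> h L lam q W"
  let ?c = "\<lambda>Is. ennreal (\<Prod>i<r. \<bar>Exi M \<beta> (Is ! i)\<bar>)"
  let ?P = "\<lambda>Is. path_sum (cfgs h) (qqhat h (\<lambda>z. \<bar>f z\<bar>) (Is ! 0) L) (\<lambda>i. QQhat h (Is ! (i - 1)) (Is ! i) L)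
      (\<lambda>i. Uhat M \<beta> h (Is ! i) L lam) r (qqbar h (\<lambda>z. \<bar>g z\<bar>) (Is ! (r - 1)) L)"
  have "Xi M \<beta> h L lam f g r = (\<Sum>Is\<in>admissible h r. ?c Is * ?P Is)"
    by (simp add: Xi_def path_sum_def)
  also have "\<dots> \<le> (\<Sum>Is\<in>admissible h r. ?c Is * (?F * ?Q ^ (r - 1) * ?U ^ r * ?G))"
    using assms False by (intro sum_mono mult_left_mono path_sum_admissible_le) auto
  also have "\<dots> = ?F * ?G * Xi_bulk M \<beta> h L lam q W r"
    by (simp add: Xi_bulk_def sum_distrib_left ac_simps)
  finally show ?thesis .
qed

end
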